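(* Consider the type with a single binary operation $\cdot$, let $\mathcal{LZ}$ be the variety of left-zero semigroups (defined by $x\cdot y=x$), and let $X=\{x,y\}$ be a two-element set. Then the free $\mathcal{LZ}^p$-algebra over $X$ is not a semigroup; specifically, $x\cdot(y\cdot x)\neq(x\cdot y)\cdot x$ in it.
   Context: In the type with one binary operation, $T_m$ is the set of terms in $x_1,\dots,x_m$ in which all $m$ variables occur. Prolongation: for an identity $\sigma$ of the form $u(y_1,\dots,y_n)=v(y_1,\dots,y_n)$ and $m\ge1$, $\sigma^p_m$ is the set of identities $u(r_1,\dots,r_n)=v(r_1,\dots,r_n)$ obtained by substituting $r_i(x_1,\dots,x_m)$ for $y_i$, with $r_i$ ranging over $T_m$; $\sigma^p=\bigcup_m\sigma^p_m$; $\Sigma^p=\bigcup_{\sigma\in\Sigma}\sigma^p$. For a variety $\mathcal{V}$, $\mathcal{V}^p$ is the variety defined by $\mathrm{Id}(\mathcal{V})^p$, where $\mathrm{Id}(\mathcal{V})$ is the set of all identities holding in $\mathcal{V}$. *)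

theory Defs
  imports Main
begin

datatype 'v trm = Var 'v | App "'v trm" "'v trm"

fun vars :: "'v trm \<Rightarrow> 'v set" where
  "vars (Var x) = {x}"
| "vars (App s t) = vars s \<union> vars t"

fun subst :: "('v \<Rightarrow> 'w trm) \<Rightarrow> 'v trm \<Rightarrow> 'w trm" where
  "subst \<sigma> (Var x) = \<sigma> x"
| "subst \<sigma> (App s t) = App (subst \<sigma> s) (subst \<sigma> t)"

fun eval :: "('a \<Rightarrow> 'a \<Rightarrow> 'a) \<Rightarrow> ('v \<Rightarrow> 'a) \<Rightarrow> 'v trm \<Rightarrow> 'a" where
  "eval f a (Var x) = a x"
| "eval f a (App s t) = f (eval f a s) (eval f a t)"

text \<open>Identities are pairs of terms over the countable variable set nat (x_1, x_2, ... = 0, 1, ...).\<close>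
type_synonym identity = "nat trm \<times> nat trm"

text \<open>T_m: terms in x_1..x_m (here variables 0..m-1) in which all m variables occur.\<close>
definition T :: "nat \<Rightarrow> nat trm set" where
  "T m = {t. vars t = {..<m}}"

definition prolong :: "identity set \<Rightarrow> identity set" where
  "prolong \<Sigma> = {(subst s u, subst s v) | u v s m.
      (u, v) \<in> \<Sigma> \<and> m \<ge> 1 \<and> (\<forall>i. s i \<in> T m)}"

definition Id_of :: "(nat \<Rightarrow> nat \<Rightarrow> nat) set \<Rightarrow> identity set" where
  "Id_of K = {(u, v). \<forall>f\<in>K. \<forall>a. eval f a u = eval f a v}"

definition LZ :: "(nat \<Rightarrow> nat \<Rightarrow> nat) set" where
  "LZ = {f. \<forall>x y. f x y = x}"

text \<open>The free algebra over X (variables of type 'x) of the variety defined by \<Sigma>: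
  terms over X modulo the least congruence containing all substitution instances of \<Sigma>.\<close>
inductive free_eq :: "identity set \<Rightarrow> 'x trm \<Rightarrow> 'x trm \<Rightarrow> bool" for \<Sigma> where
  inst: "(u, v) \<in> \<Sigma> \<Longrightarrow> free_eq \<Sigma> (subst s u) (subst s v)"
| refl: "free_eq \<Sigma> t t"
| sym: "free_eq \<Sigma> s t \<Longrightarrow> free_eq \<Sigma> t s"
| trans: "free_eq \<Sigma> s t \<Longrightarrow> free_eq \<Sigma> t r \<Longrightarrow> free_eq \<Sigma> s r"
| cong: "free_eq \<Sigma> s s' \<Longrightarrow> free_eq \<Sigma> t t' \<Longrightarrow> free_eq \<Sigma> (App s t) (App s' t')"

end

theory Submission
  imports Defs
begin

text \<open>On terms over \<open>X\<close> put \<open>e \<cdot> f = e\<close> if every variable of \<open>f\<close> already occurs in \<open>e\<close>,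
  and \<open>e \<cdot> f = ef\<close> otherwise. Whenever all inputs have the same set of variables, a product
  collapses to its leftmost factor, so this algebra satisfies every left-zero identity
  \<open>u = v\<close> (i.e. \<open>u\<close>, \<open>v\<close> with the same leftmost variable) after substituting terms from a
  single \<open>T\<^sub>m\<close>, whose evaluations all share the variables of \<open>x\<^sub>1, \<dots>, x\<^sub>m\<close>. Hence it is an
  \<open>\<L>\<Z>\<^sup>p\<close>-algebra, and in it \<open>x \<cdot> (y \<cdot> x) = x(yx)\<close> differs from \<open>(x \<cdot> y) \<cdot> x = xy\<close>.\<close>

definition satisfies :: "('a \<Rightarrow> 'a \<Rightarrow> 'a) \<Rightarrow> identity set \<Rightarrow> bool" where
  "satisfies f \<Sigma> \<longleftrightarrow> (\<forall>(u, v) \<in> \<Sigma>. \<forall>a. eval f a u = eval f a v)"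

lemma eval_subst: "eval f a (subst s u) = eval f (\<lambda>i. eval f a (s i)) u"
  by (induction u) auto

lemma free_eq_sound:
  assumes "satisfies f \<Sigma>" and "free_eq \<Sigma> t t'"
  shows "eval f a t = eval f a t'"
  using assms(2) by induction (use assms(1) in \<open>auto simp: satisfies_def eval_subst\<close>)

fun leftmost_var :: "'v trm \<Rightarrow> 'v" where
  "leftmost_var (Var x) = x"
| "leftmost_var (App s t) = leftmost_var s"

lemma eval_left_zero: "eval (\<lambda>x y. x) a u = a (leftmost_var u)"
  by (induction u) auto

lemma Id_of_LZ_leftmost_var:
  assumes "(u, v) \<in> Id_of LZ"
  shows "leftmost_var u = leftmost_var v"
proof -
  have "eval (\<lambda>x y. x) id u = eval (\<lambda>x y. x) id v"
    using assms unfolding Id_of_def LZ_def by auto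
  then show ?thesis by (simp add: eval_left_zero)
qed

lemma vars_nonempty: "vars t \<noteq> {}"
  by (induction t) auto

definition absorb :: "'x trm \<Rightarrow> 'x trm \<Rightarrow> 'x trm" where
  "absorb e f = (if vars f \<subseteq> vars e then e else App e f)"

lemma vars_absorb: "vars (absorb e f) = vars e \<union> vars f"
  unfolding absorb_def by auto

lemma vars_eval_absorb: "vars (eval absorb a t) = (\<Union>v \<in> vars t. vars (a v))"
  by (induction t) (auto simp: vars_absorb)

lemma eval_absorb_uniform:
  assumes "\<And>i. vars (b i) = C"
  shows "eval absorb b u = b (leftmost_var u)"
proof (induction u)
  case (App s t)
  have "vars (eval absorb b t) = C"
    using assms vars_nonempty[of t] by (simp add: vars_eval_absorb)
  with App.IH assms show ?case by (simp add: absorb_def[of "b (leftmost_var s)"])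
qed simp

lemma absorb_satisfies_prolong_LZ: "satisfies absorb (prolong (Id_of LZ))"
  unfolding satisfies_def
proof (clarify)
  fix u v a
  assume "(u, v) \<in> prolong (Id_of LZ)"
  then obtain u0 v0 r m where uv: "u = subst r u0" "v = subst r v0"
    and LZ_id: "(u0, v0) \<in> Id_of LZ" and r: "\<forall>i. r i \<in> T m"
    unfolding prolong_def by blast
  define b where "b i = eval absorb a (r i)" for i
  have vars_b: "vars (b i) = (\<Union>j<m. vars (a j))" for i
    using r unfolding b_def T_def by (auto simp: vars_eval_absorb)
  have "eval absorb a u = b (leftmost_var u0)"
    unfolding uv eval_subst b_def[symmetric] by (rule eval_absorb_uniform[OF vars_b])
  also have "\<dots> = b (leftmost_var v0)"
    using Id_of_LZ_leftmost_var[OF LZ_id] by simp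
  also have "\<dots> = eval absorb a v"
    unfolding uv eval_subst b_def[symmetric] by (rule eval_absorb_uniform[OF vars_b, symmetric])
  finally show "eval absorb a u = eval absorb a v" .
qed

theorem corollary4p12:
  fixes x y :: bool
  defines "x \<equiv> True" and "y \<equiv> False"
  shows "\<not> free_eq (prolong (Id_of LZ))
            (App (Var x) (App (Var y) (Var x)))
            (App (App (Var x) (Var y)) (Var x))"
proof
  assume "free_eq (prolong (Id_of LZ))
            (App (Var x) (App (Var y) (Var x)))
            (App (App (Var x) (Var y)) (Var x))"
  then have "eval absorb Var (App (Var x) (App (Var y) (Var x))) =
             eval absorb Var (App (App (Var x) (Var y)) (Var x))"
    by (rule free_eq_sound[OF absorb_satisfies_prolong_LZ])
  then show False unfolding x_def y_def by (simp add: absorb_def)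
qed

end
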